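(* Let $(G,\sigma)$ be a connection graph. For any distinct $i,j\in V$, $r^\sigma_{ij}\le r_{ij}$.
   Context: A connection graph $(G,\sigma)$: finite connected weighted graph $G=(V,E,W)$, $V=\{1,\dots,n\}$, $w_{xy}>0$ iff $\{x,y\}\in E$, $\deg(x)=\sum_yw_{xy}$, and a $d$-dimensional signature $\sigma$ mapping oriented edges to $\mathsf{O}(d)$ with $\sigma_{yx}=\sigma_{xy}^{\mathrm T}$. $r_{ij}=(e_i-e_j)^{\mathrm T}L^\dagger(e_i-e_j)$ is the classical effective resistance, $L=D-W$. Connection Laplacian $\mathcal{L}$: $nd\times nd$ block matrix with blocks $\deg(x)I_d$ on the diagonal, $-w_{xy}\sigma_{xy}$ for $x\sim y$, $0$ otherwise. $\Omega^0_{ij}=\mathbb{E}[\prod_{\ell=1}^{T^0_j}\sigma_{X_{\ell-1}X_\ell}\mid X_0=i]$ for the simple random walk with transition probabilities $w_{xy}/\deg(x)$ and $T^0_j=\inf\{t\ge0:X_t=j\}$. $N_{ij}$: $nd\times d$ block column with $I_d$ at node $i$, $-(\Omega^0_{ij})^{\mathrm T}$ at node $j$, $0$ elsewhere; $\mathcal{W}_{i\to j}=\mathcal{L}^\dagger N_{ij}$. Connection effective resistance: $r^\sigma_{ij}=\frac{1}{2d}\operatorname{Tr}\big(\mathcal{W}_{i\to j}^{\mathrm T}\mathcal{L}\mathcal{W}_{i\to j}+\mathcal{W}_{j\to i}^{\mathrm T}\mathcal{L}\mathcal{W}_{j\to i}\big)$. *)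

theory Defs
  imports "HOL-Analysis.Analysis"
begin

text \<open>Vertices are the elements of a finite type 'n (playing the role of V = {1..n});
  the signature dimension d is CARD('d) for a finite type 'd.
  Weights are a function w :: 'n => 'n => real.\<close>

definition conn_graph :: "('n::finite \<Rightarrow> 'n \<Rightarrow> real) \<Rightarrow> ('n \<Rightarrow> 'n \<Rightarrow> real^'d::finite^'d) \<Rightarrow> bool" where
  "conn_graph w \<sigma> \<longleftrightarrow>
     (\<forall>x y. w x y = w y x) \<and> (\<forall>x y. w x y \<ge> 0) \<and> (\<forall>x. w x x = 0) \<and>
     (\<forall>x y. ((\<lambda>a b. w a b > 0)\<^sup>*\<^sup>*) x y) \<and>
     (\<forall>x y. w x y > 0 \<longrightarrow> orthogonal_matrix (\<sigma> x y) \<and> \<sigma> y x = transpose (\<sigma> x y))"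

definition gdeg :: "('n::finite \<Rightarrow> 'n \<Rightarrow> real) \<Rightarrow> 'n \<Rightarrow> real" where
  "gdeg w x = (\<Sum>y\<in>UNIV. w x y)"

text \<open>Moore--Penrose pseudoinverse, via the Penrose equations (it exists and is unique).\<close>
definition pinv :: "real^'n::finite^'m::finite \<Rightarrow> real^'m^'n" where
  "pinv A = (THE X. A ** X ** A = A \<and> X ** A ** X = X \<and>
                    transpose (A ** X) = A ** X \<and> transpose (X ** A) = X ** A)"

definition mtrace :: "real^'d::finite^'d \<Rightarrow> real" where
  "mtrace A = (\<Sum>a\<in>UNIV. A $ a $ a)"

definition lap :: "('n::finite \<Rightarrow> 'n \<Rightarrow> real) \<Rightarrow> real^'n^'n" where
  "lap w = (\<chi> x y. (if x = y then gdeg w x else 0) - w x y)"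

definition eff_res :: "('n::finite \<Rightarrow> 'n \<Rightarrow> real) \<Rightarrow> 'n \<Rightarrow> 'n \<Rightarrow> real" where
  "eff_res w i j = (let v = axis i (1::real) - axis j 1 in v \<bullet> (pinv (lap w) *v v))"

definition conn_lap :: "('n::finite \<Rightarrow> 'n \<Rightarrow> real) \<Rightarrow> ('n \<Rightarrow> 'n \<Rightarrow> real^'d::finite^'d) \<Rightarrow> real^('n \<times> 'd)^('n \<times> 'd)" where
  "conn_lap w \<sigma> = (\<chi> r c.
      (if r = c then gdeg w (fst r) else 0) - w (fst r) (fst c) * (\<sigma> (fst r) (fst c) $ snd r $ snd c))"

fun path_prob :: "('n::finite \<Rightarrow> 'n \<Rightarrow> real) \<Rightarrow> 'n list \<Rightarrow> real" where
  "path_prob w (x # y # p) = w x y / gdeg w x * path_prob w (y # p)"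
| "path_prob w _ = 1"

fun path_sig :: "('n \<Rightarrow> 'n \<Rightarrow> real^'d::finite^'d) \<Rightarrow> 'n list \<Rightarrow> real^'d^'d" where
  "path_sig \<sigma> (x # y # p) = \<sigma> x y ** path_sig \<sigma> (y # p)"
| "path_sig \<sigma> _ = mat 1"

definition hit_paths :: "'n \<Rightarrow> 'n \<Rightarrow> 'n list set" where
  "hit_paths i j = {p. p \<noteq> [] \<and> hd p = i \<and> last p = j \<and> j \<notin> set (butlast p)}"

text \<open>Omega^0_{ij}: the expectation of the product of signatures along the random walk
  started at i and stopped at the hitting time of j, written as the sum over the
  (countably many) possible trajectories up to the hitting time.\<close>
definition Omega0 :: "('n::finite \<Rightarrow> 'n \<Rightarrow> real) \<Rightarrow> ('n \<Rightarrow> 'n \<Rightarrow> real^'d::finite^'d) \<Rightarrow> 'n \<Rightarrow> 'n \<Rightarrow> real^'d^'d" where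
  "Omega0 w \<sigma> i j = infsum (\<lambda>p. path_prob w p *\<^sub>R path_sig \<sigma> p) (hit_paths i j)"

definition Nmat :: "('n::finite \<Rightarrow> 'n \<Rightarrow> real) \<Rightarrow> ('n \<Rightarrow> 'n \<Rightarrow> real^'d::finite^'d) \<Rightarrow> 'n \<Rightarrow> 'n \<Rightarrow> real^'d^('n \<times> 'd)" where
  "Nmat w \<sigma> i j = (\<chi> r b.
      if fst r = i then (if snd r = b then 1 else 0)
      else if fst r = j then - (transpose (Omega0 w \<sigma> i j) $ snd r $ b) else 0)"

definition Wmat :: "('n::finite \<Rightarrow> 'n \<Rightarrow> real) \<Rightarrow> ('n \<Rightarrow> 'n \<Rightarrow> real^'d::finite^'d) \<Rightarrow> 'n \<Rightarrow> 'n \<Rightarrow> real^'d^('n \<times> 'd)" where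
  "Wmat w \<sigma> i j = pinv (conn_lap w \<sigma>) ** Nmat w \<sigma> i j"

definition conn_eff_res :: "('n::finite \<Rightarrow> 'n \<Rightarrow> real) \<Rightarrow> ('n \<Rightarrow> 'n \<Rightarrow> real^'d::finite^'d) \<Rightarrow> 'n \<Rightarrow> 'n \<Rightarrow> real" where
  "conn_eff_res w \<sigma> i j = 1 / (2 * real CARD('d)) *
     mtrace (transpose (Wmat w \<sigma> i j) ** conn_lap w \<sigma> ** Wmat w \<sigma> i j
           + transpose (Wmat w \<sigma> j i) ** conn_lap w \<sigma> ** Wmat w \<sigma> j i)"

end

theory Submission
  imports Defs
begin

text \<open>
  Write \<open>\<L>\<close> for the connection Laplacian and \<open>L\<close> for the classical one. The diagonal entries of
  \<open>W\<^sub>i\<^sub>j\<^sup>T \<L> W\<^sub>i\<^sub>j = N\<^sub>i\<^sub>j\<^sup>T \<L>\<^sup>+ N\<^sub>i\<^sub>j\<close> are \<open>n\<^sup>T \<L>\<^sup>+ n\<close> for the columns \<open>n\<close> of \<open>N\<^sub>i\<^sub>j\<close>, and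
  \<open>n\<^sup>T \<L>\<^sup>+ n \<le> K\<close> as soon as \<open>2 n\<bullet>Y - Y\<^sup>T \<L> Y \<le> K\<close> for all \<open>Y\<close>. Here \<open>n\<bullet>Y\<close> is a coordinate of
  \<open>Y\<^sub>i - \<Omega>\<^sub>i\<^sub>j Y\<^sub>j\<close>. First-step analysis shows that \<open>x \<mapsto> \<Omega>\<^sub>x\<^sub>j c\<close> is \<open>\<L>\<close>-harmonic
  off \<open>j\<close> and equals \<open>c\<close> at \<open>j\<close>; subtracting it with \<open>c = Y\<^sub>j\<close> yields \<open>Z\<close> with \<open>Z\<^sub>j = 0\<close>,
  \<open>Z\<^sub>i = Y\<^sub>i - \<Omega>\<^sub>i\<^sub>j Y\<^sub>j\<close> and no larger energy. The vertex norms \<open>f\<^sub>x = |Z\<^sub>x|\<close> have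
  \<open>f\<^sup>T L f \<le> Z\<^sup>T \<L> Z\<close>, and Cauchy--Schwarz for \<open>L\<^sup>+\<close> gives \<open>(f\<^sub>i - f\<^sub>j)\<^sup>2 \<le> r\<^sub>i\<^sub>j f\<^sup>T L f\<close>.
  Hence \<open>(n\<bullet>Y)\<^sup>2 \<le> r\<^sub>i\<^sub>j Y\<^sup>T \<L> Y\<close>, so \<open>2 n\<bullet>Y - Y\<^sup>T \<L> Y \<le> r\<^sub>i\<^sub>j\<close>, and each of the \<open>2d\<close>
  diagonal entries in the definition of \<open>r\<^sup>\<sigma>\<^sub>i\<^sub>j\<close> is at most \<open>r\<^sub>i\<^sub>j\<close>.
\<close>

lemma matrix_add_rdistrib: "(B + C) ** A = B ** A + C ** A"
  by (vector matrix_matrix_mult_def sum.distrib[symmetric] field_simps)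

lemma matrix_diff_ldistrib: "A ** (B - C) = A ** B - A ** (C::'a::ring_1^_^_)"
  by (vector matrix_matrix_mult_def sum_subtractf[symmetric] field_simps)

lemma matrix_diff_rdistrib: "(B - C) ** A = B ** A - C ** (A::'a::ring_1^_^_)"
  by (vector matrix_matrix_mult_def sum_subtractf[symmetric] field_simps)

lemma transpose_diff: "transpose (A - B) = transpose A - transpose (B::'a::ab_group_add^_^_)"
  by (vector transpose_def)

lemma matrix_vector_mult_sum_left:
  "finite S \<Longrightarrow> (\<Sum>s\<in>S. f s) *v v = (\<Sum>s\<in>S. f s *v v)"
  by (induction S rule: finite_induct) (auto simp: matrix_vector_mult_add_rdistrib)

lemma symmetric_matrix_inner_commute:
  fixes A :: "real^'k::finite^'k"
  assumes "transpose A = A"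
  shows "x \<bullet> (A *v y) = y \<bullet> (A *v x)"
  by (metis assms dot_lmul_matrix inner_commute transpose_matrix_vector)

section \<open>Symmetric matrices and their Penrose inverses\<close>

definition penrose_inverse :: "real^'n::finite^'m::finite \<Rightarrow> real^'m^'n \<Rightarrow> bool" where
  "penrose_inverse A X \<longleftrightarrow> A ** X ** A = A \<and> X ** A ** X = X \<and>
     transpose (A ** X) = A ** X \<and> transpose (X ** A) = X ** A"

lemma penrose_inverse_unique:
  assumes X: "penrose_inverse A X" and Y: "penrose_inverse A Y"
  shows "X = Y"
proof -
  have x1: "A ** X ** A = A" and x2: "X ** A ** X = X" and x3: "transpose (A ** X) = A ** X"
    and x4: "transpose (X ** A) = X ** A" using X by (auto simp: penrose_inverse_def)
  have y1: "A ** Y ** A = A" and y2: "Y ** A ** Y = Y" and y3: "transpose (A ** Y) = A ** Y"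
    and y4: "transpose (Y ** A) = Y ** A" using Y by (auto simp: penrose_inverse_def)
  have tY: "transpose A = transpose A ** transpose Y ** transpose A"
    by (metis y1 matrix_transpose_mul matrix_mul_assoc)
  have tX: "transpose A = transpose A ** transpose X ** transpose A"
    by (metis x1 matrix_transpose_mul matrix_mul_assoc)
  have "X = X ** transpose (A ** X)" using x2 x3 by (simp add: matrix_mul_assoc)
  also have "\<dots> = X ** transpose X ** (transpose A ** transpose Y ** transpose A)"
    by (metis tY matrix_transpose_mul matrix_mul_assoc)
  also have "\<dots> = X ** transpose (A ** X) ** transpose (A ** Y)"
    by (simp add: matrix_transpose_mul matrix_mul_assoc)
  also have "\<dots> = X ** A ** Y" using x2 x3 y3 by (simp add: matrix_mul_assoc)
  finally have XAY: "X = X ** A ** Y" .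
  have "Y = transpose (Y ** A) ** Y" using y2 y4 by simp
  also have "\<dots> = (transpose A ** transpose X ** transpose A) ** transpose Y ** Y"
    by (metis tX matrix_transpose_mul)
  also have "\<dots> = transpose (X ** A) ** transpose (Y ** A) ** Y"
    by (simp add: matrix_transpose_mul matrix_mul_assoc)
  also have "\<dots> = X ** A ** (Y ** A ** Y)" using x4 y4 by (simp add: matrix_mul_assoc)
  finally show ?thesis using XAY y2 by simp
qed

lemma pinv_eqI:
  assumes "penrose_inverse A X"
  shows "pinv A = X"
  unfolding pinv_def penrose_inverse_def[symmetric]
  using assms penrose_inverse_unique by blast

lemma orthogonal_projection_matrix_exists:
  fixes S :: "(real^'n::finite) set"
  assumes "subspace S"
  obtains P :: "real^'n^'n" where "transpose P = P" and "\<And>x. P *v x \<in> S"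
    and "\<And>x. x \<in> S \<Longrightarrow> P *v x = x"
proof -
  obtain B where BS: "B \<subseteq> S" and orth: "pairwise orthogonal B"
    and unit: "\<And>x. x \<in> B \<Longrightarrow> norm x = 1" and indep: "independent B" and span: "span B = S"
    using orthonormal_basis_subspace[OF assms] by metis
  have fin: "finite B" using indep independent_imp_finite by blast
  define P :: "real^'n^'n" where "P = (\<chi> k l. \<Sum>b\<in>B. b$k * b$l)"
  have Pv: "P *v x = (\<Sum>b\<in>B. (b \<bullet> x) *\<^sub>R b)" for x
    by (simp add: vec_eq_iff P_def matrix_vector_mult_def inner_vec_def sum_component
        sum_distrib_left sum_distrib_right mult_ac sum.swap[of _ UNIV B])
  have inner_basis: "b \<bullet> c = (if b = c then 1 else 0)" if "b \<in> B" "c \<in> B" for b c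
    using orth unit that by (auto simp: pairwise_def orthogonal_def dot_square_norm)
  show ?thesis
  proof
    show "transpose P = P" by (vector P_def transpose_def mult.commute)
    show "P *v x \<in> S" for x
      unfolding Pv using BS by (intro subspace_sum[OF assms] subspace_scale[OF assms]) auto
    show "P *v x = x" if "x \<in> S" for x
    proof -
      have "x \<in> span B" using that span by simp
      then obtain u where u: "x = (\<Sum>c\<in>B. u c *\<^sub>R c)"
        using span_finite[OF fin] by auto
      have "b \<bullet> x = u b" if "b \<in> B" for b
      proof -
        have "b \<bullet> x = (\<Sum>c\<in>B. if c = b then u c else 0)"
          unfolding u inner_sum_right by (rule sum.cong) (auto simp: inner_basis that)
        then show ?thesis using fin that by simp
      qed
      then show ?thesis by (simp add: Pv u)
    qed
  qed
qed

lemma penrose_inverse_exists_symmetric: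
  fixes A :: "real^'n::finite^'n"
  assumes sym: "transpose A = A"
  obtains X where "penrose_inverse A X"
proof -
  obtain P :: "real^'n^'n" where Psym: "transpose P = P" and PK: "\<And>x. A *v (P *v x) = 0"
    and PK_id: "\<And>x. A *v x = 0 \<Longrightarrow> P *v x = x"
    using orthogonal_projection_matrix_exists[of "{x. A *v x = 0}"]
    by (auto simp: subspace_def matrix_vector_right_distrib matrix_vector_mult_scaleR)
  have AP: "A ** P = 0"
    by (subst matrix_eq) (use PK in \<open>simp add: matrix_vector_mul_assoc[symmetric]\<close>)
  have PP: "P ** P = P"
    by (subst matrix_eq) (use PK PK_id in \<open>simp add: matrix_vector_mul_assoc[symmetric]\<close>)
  have PA: "P ** A = 0"
    by (metis AP Psym sym matrix_transpose_mul transpose_transpose transpose_mat mat_0)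
  \<comment> \<open>\<open>A + P\<close> is the identity on the kernel of \<open>A\<close> and agrees with \<open>A\<close> on its orthogonal
    complement, so it is invertible, and \<open>(A + P)\<inverse> - P\<close> is the Penrose inverse.\<close>
  have "inj ((*v) (A + P))"
  proof (rule linear_injective_0[THEN iffD2])
    show "\<forall>x. (A + P) *v x = 0 \<longrightarrow> x = 0"
    proof (intro allI impI)
      fix x assume "(A + P) *v x = 0"
      then have Ax: "A *v x = - (P *v x)"
        by (simp add: matrix_vector_mult_add_rdistrib eq_neg_iff_add_eq_0)
      have "(A *v x) \<bullet> (A *v x) = - ((P *v x) \<bullet> (A *v x))"
        by (simp add: Ax)
      also have "\<dots> = - (x \<bullet> (A *v (P *v x)))"
        by (simp add: symmetric_matrix_inner_commute[OF sym])
      finally have "A *v x = 0" by (simp add: PK)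
      then show "x = 0" using Ax PK_id by simp
    qed
  qed simp
  then obtain N where NM: "N ** (A + P) = mat 1"
    using matrix_left_invertible_injective by blast
  then have MN: "(A + P) ** N = mat 1" using matrix_left_right_inverse by blast
  have MP: "(A + P) ** P = P" by (simp add: matrix_add_rdistrib AP PP)
  have PM: "P ** (A + P) = P" by (simp add: matrix_add_ldistrib PA PP)
  have NP: "N ** P = P" by (metis MP NM matrix_mul_assoc matrix_mul_lid)
  have PN: "P ** N = P" by (metis PM MN matrix_mul_assoc matrix_mul_rid)
  have AX: "A ** (N - P) = mat 1 - P"
    using MN by (simp add: matrix_diff_ldistrib matrix_add_rdistrib AP PN eq_diff_eq)
  have XA: "(N - P) ** A = mat 1 - P"
    using NM by (simp add: matrix_diff_rdistrib matrix_add_ldistrib PA NP eq_diff_eq)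
  have "penrose_inverse A (N - P)"
    unfolding penrose_inverse_def AX XA
    by (simp add: matrix_diff_ldistrib matrix_diff_rdistrib transpose_diff Psym PA PN PP)
  then show ?thesis ..
qed

lemma
  fixes A :: "real^'n::finite^'n"
  assumes "transpose A = A"
  shows penrose_inverse_pinv_symmetric: "penrose_inverse A (pinv A)"
    and pinv_symmetric: "transpose (pinv A) = pinv A"
proof -
  obtain X where X: "penrose_inverse A X"
    using penrose_inverse_exists_symmetric[OF assms] .
  then show pen: "penrose_inverse A (pinv A)" by (simp add: pinv_eqI)
  have "penrose_inverse A (transpose (pinv A))"
    using pen assms unfolding penrose_inverse_def
    by (metis matrix_transpose_mul transpose_transpose matrix_mul_assoc)
  then show "transpose (pinv A) = pinv A" using pen by (rule penrose_inverse_unique)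
qed

lemma psd_cauchy_schwarz:
  fixes A :: "real^'k::finite^'k"
  assumes sym: "transpose A = A" and psd: "\<And>u. u \<bullet> (A *v u) \<ge> 0"
  shows "(g \<bullet> (A *v f))\<^sup>2 \<le> (g \<bullet> (A *v g)) * (f \<bullet> (A *v f))"
proof -
  define a b c where "a = g \<bullet> (A *v g)" and "b = g \<bullet> (A *v f)" and "c = f \<bullet> (A *v f)"
  have quadratic: "0 \<le> a + 2 * t * b + t\<^sup>2 * c" for t
  proof -
    have "0 \<le> (g + t *\<^sub>R f) \<bullet> (A *v (g + t *\<^sub>R f))" by (rule psd)
    also have "\<dots> = a + t * (f \<bullet> (A *v g)) + t * b + t * t * c"
      by (simp add: a_def b_def c_def matrix_vector_right_distrib matrix_vector_mult_scaleR
          inner_add_left inner_add_right algebra_simps)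
    finally show ?thesis
      by (simp add: b_def symmetric_matrix_inner_commute[OF sym, of f] power2_eq_square algebra_simps)
  qed
  have "c \<ge> 0" using psd[of f] by (simp add: c_def)
  show ?thesis
  proof (cases "c = 0")
    case True
    have "b = 0"
    proof (rule ccontr)
      assume "b \<noteq> 0"
      then show False using quadratic[of "- (a + 1) / (2 * b)"] True by (simp add: field_simps)
    qed
    then show ?thesis using True by (simp add: b_def c_def)
  next
    case False
    with \<open>c \<ge> 0\<close> have "c > 0" by simp
    then have "b\<^sup>2 \<le> a * c"
      using quadratic[of "- b / c"] by (simp add: power2_eq_square field_simps)
    then show ?thesis by (simp add: a_def b_def c_def)
  qed
qed

lemma penrose_inverse_quadratic_form_le:
  fixes C X :: "real^'k::finite^'k"
  assumes pen: "penrose_inverse C X" and sym: "transpose X = X"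
    and bound: "\<And>y. 2 * (n \<bullet> y) - y \<bullet> (C *v y) \<le> K"
  shows "n \<bullet> (X *v n) \<le> K"
proof -
  have "X ** C ** X = X" using pen by (simp add: penrose_inverse_def)
  then have "(X *v n) \<bullet> (C *v (X *v n)) = n \<bullet> (X *v n)"
    by (metis inner_commute symmetric_matrix_inner_commute[OF sym] matrix_vector_mul_assoc)
  then show ?thesis using bound[of "X *v n"] by simp
qed

lemma two_mul_sub_le_of_square_le:
  fixes s r e :: real
  assumes "s\<^sup>2 \<le> r * e" and "r \<ge> 0" and "e \<ge> 0"
  shows "2 * s - e \<le> r"
proof (cases "r = 0")
  case True
  then show ?thesis using assms by simp
next
  case False
  with assms have "r * (2 * s - e) \<le> r * r"
    using sum_squares_ge_zero[of "r - s" 0] by (simp add: power2_eq_square algebra_simps)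
  then show ?thesis using False \<open>r \<ge> 0\<close> by simp
qed

lemma diag_transpose_mult_mult:
  fixes N :: "real^'b::finite^'k::finite" and M :: "real^'k^'k"
  shows "(transpose N ** M ** N) $ b $ b = column b N \<bullet> (M *v column b N)"
  by (simp add: matrix_matrix_mult_def transpose_def column_def inner_vec_def matrix_vector_mult_def
      sum_distrib_left sum_distrib_right mult_ac) (subst sum.swap, simp add: mult_ac)

lemma mtrace_add: "mtrace (A + B) = mtrace A + mtrace B"
  by (simp add: mtrace_def sum.distrib)

section \<open>Hitting paths of the random walk\<close>

lemma hit_paths_self: "hit_paths j j = {[j]}"
proof -
  have "p = [j]" if "p \<in> hit_paths j j" for p
  proof (cases p)
    case (Cons a q)
    with that show ?thesis by (cases q rule: rev_cases) (auto simp: hit_paths_def)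
  qed (use that in \<open>simp add: hit_paths_def\<close>)
  then show ?thesis by (auto simp: hit_paths_def)
qed

lemma hit_paths_hd: "p \<in> hit_paths x j \<Longrightarrow> p \<noteq> [] \<and> hd p = x"
  by (simp add: hit_paths_def)

lemma hit_paths_Cons:
  assumes "x \<noteq> j"
  shows "hit_paths x j = (\<Union>y. (#) x ` hit_paths y j)"
proof (intro equalityI subsetI)
  fix p assume p: "p \<in> hit_paths x j"
  then obtain q where pq: "p = x # q" by (cases p) (auto simp: hit_paths_def)
  with p assms have "q \<in> hit_paths (hd q) j" by (cases q) (auto simp: hit_paths_def)
  with pq show "p \<in> (\<Union>y. (#) x ` hit_paths y j)" by blast
qed (use assms in \<open>auto simp: hit_paths_def\<close>)

lemma finite_hit_paths_length_le: "finite (hit_paths (x::'n::finite) j \<inter> {p. length p \<le> T})"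
  by (rule finite_subset[OF _ finite_lists_length_le[of "UNIV::'n set" T]]) auto

lemma path_prob_Cons: "q \<noteq> [] \<Longrightarrow> path_prob w (x # q) = w x (hd q) / gdeg w x * path_prob w q"
  by (cases q) auto

lemma path_sig_Cons: "q \<noteq> [] \<Longrightarrow> path_sig \<sigma> (x # q) = \<sigma> x (hd q) ** path_sig \<sigma> q"
  by (cases q) auto

lemma gdeg_nonneg: "(\<And>x y. w x y \<ge> 0) \<Longrightarrow> gdeg w x \<ge> 0"
  by (simp add: gdeg_def sum_nonneg)

lemma path_prob_nonneg: "(\<And>x y. w x y \<ge> 0) \<Longrightarrow> path_prob w p \<ge> 0"
  by (induction w p rule: path_prob.induct) (auto intro!: divide_nonneg_nonneg gdeg_nonneg)

lemma sum_path_prob_hit_paths_le_1: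
  fixes w :: "'n::finite \<Rightarrow> 'n \<Rightarrow> real"
  assumes nonneg: "\<And>x y. w x y \<ge> 0"
  shows "sum (path_prob w) (hit_paths x j \<inter> {p. length p \<le> T}) \<le> 1"
proof (induction T arbitrary: x)
  case 0
  have "hit_paths x j \<inter> {p. length p \<le> 0} = {}" by (auto simp: hit_paths_def)
  then show ?case by simp
next
  case (Suc T)
  show ?case
  proof (cases "x = j")
    case True
    have "sum (path_prob w) (hit_paths x j \<inter> {p. length p \<le> Suc T}) \<le> sum (path_prob w) {[j]}"
      by (rule sum_mono2) (auto simp: True hit_paths_self path_prob_nonneg nonneg)
    then show ?thesis by simp
  next
    case False
    let ?H = "\<lambda>y. hit_paths y j \<inter> {p. length p \<le> T}"
    have split: "hit_paths x j \<inter> {p. length p \<le> Suc T} = (\<Union>y. (#) x ` ?H y)"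
      using hit_paths_Cons[OF False] by auto
    have step: "sum (path_prob w) ((#) x ` ?H y) = w x y / gdeg w x * sum (path_prob w) (?H y)" for y
    proof -
      have "sum (path_prob w) ((#) x ` ?H y) = sum (\<lambda>q. path_prob w (x # q)) (?H y)"
        by (simp add: sum.reindex)
      also have "\<dots> = sum (\<lambda>q. w x y / gdeg w x * path_prob w q) (?H y)"
        by (rule sum.cong) (auto simp: path_prob_Cons dest: hit_paths_hd)
      finally show ?thesis by (simp add: sum_distrib_left)
    qed
    have "sum (path_prob w) (hit_paths x j \<inter> {p. length p \<le> Suc T})
        = (\<Sum>y\<in>UNIV. w x y / gdeg w x * sum (path_prob w) (?H y))"
      unfolding split step[symmetric]
      by (rule sum.UNION_disjoint) (auto simp: finite_hit_paths_length_le dest: hit_paths_hd)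
    also have "\<dots> \<le> (\<Sum>y\<in>UNIV. w x y / gdeg w x)"
      by (intro sum_mono mult_right_le_one_le) (auto intro!: Suc divide_nonneg_nonneg gdeg_nonneg
          sum_nonneg path_prob_nonneg nonneg)
    also have "\<dots> \<le> 1" by (simp add: gdeg_def flip: sum_divide_distrib)
    finally show ?thesis .
  qed
qed

lemma path_prob_summable_on_hit_paths:
  fixes w :: "'n::finite \<Rightarrow> 'n \<Rightarrow> real"
  assumes nonneg: "\<And>x y. w x y \<ge> 0"
  shows "path_prob w summable_on hit_paths x j"
proof (rule nonneg_bdd_above_summable_on)
  show "0 \<le> path_prob w p" for p using path_prob_nonneg nonneg by blast
  show "bdd_above (sum (path_prob w) ` {F. F \<subseteq> hit_paths x j \<and> finite F})"
  proof (rule bdd_aboveI, safe)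
    fix F assume F: "F \<subseteq> hit_paths x j" "finite F"
    then have "F \<subseteq> hit_paths x j \<inter> {p. length p \<le> Max (length ` F)}" by auto
    then have "sum (path_prob w) F \<le> sum (path_prob w) (hit_paths x j \<inter> {p. length p \<le> Max (length ` F)})"
      by (rule sum_mono2[OF finite_hit_paths_length_le]) (auto simp: path_prob_nonneg nonneg)
    also have "\<dots> \<le> 1" by (rule sum_path_prob_hit_paths_le_1[OF nonneg])
    finally show "sum (path_prob w) F \<le> 1" .
  qed
qed

lemma orthogonal_matrix_path_sig:
  assumes nonneg: "\<And>x y. w x y \<ge> 0"
    and orth: "\<And>x y. w x y > 0 \<Longrightarrow> orthogonal_matrix (\<sigma> x y)"
  shows "path_prob w p \<noteq> 0 \<Longrightarrow> orthogonal_matrix (path_sig \<sigma> p)"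
proof (induction p rule: induct_list012)
  case (3 x y zs)
  then have "w x y > 0" using nonneg[of x y] by (auto simp: order_le_less)
  with 3 show ?case by (auto intro: orthogonal_matrix_mul orth)
qed (simp_all add: orthogonal_matrix_id)

lemma norm_orthogonal_matrix:
  fixes M :: "real^'d::finite^'d"
  assumes "orthogonal_matrix M"
  shows "norm M = sqrt (real CARD('d))"
proof -
  have "M$i \<bullet> M$i = 1" for i
    using assms by (simp add: orthogonal_matrix_def vec_eq_iff mat_def
        matrix_mult_transpose_dot_row row_def)
  then have "norm (M$i) = 1" for i by (simp add: norm_eq_sqrt_inner)
  then show ?thesis by (simp add: norm_vec_def L2_set_def)
qed

lemma Omega0_self: "Omega0 w \<sigma> j j = mat 1"
  by (simp add: Omega0_def hit_paths_self)

lemma bounded_linear_matrix_mult_left: "bounded_linear (\<lambda>M::real^'n::finite^'n. A ** M)"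
  unfolding linear_conv_bounded_linear[symmetric]
  by (rule linearI) (simp_all add: matrix_add_ldistrib matrix_scalar_ac scalar_matrix_assoc)

context
  fixes w :: "'n::finite \<Rightarrow> 'n \<Rightarrow> real" and \<sigma> :: "'n \<Rightarrow> 'n \<Rightarrow> real^'d::finite^'d"
  assumes nonneg: "\<And>x y. w x y \<ge> 0"
    and orth: "\<And>x y. w x y > 0 \<Longrightarrow> orthogonal_matrix (\<sigma> x y)"
begin

lemma Omega0_summable: "(\<lambda>p. path_prob w p *\<^sub>R path_sig \<sigma> p) summable_on hit_paths x j"
proof -
  let ?K = "sqrt (real CARD('d))"
  have summable: "(\<lambda>p. ?K * path_prob w p) summable_on hit_paths x j"
    using path_prob_summable_on_hit_paths[OF nonneg] by (rule summable_on_cmult_right)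
  have bound: "norm (path_prob w p *\<^sub>R path_sig \<sigma> p) \<le> ?K * path_prob w p" for p
  proof (cases "path_prob w p = 0")
    case False
    then have "orthogonal_matrix (path_sig \<sigma> p)"
      using orthogonal_matrix_path_sig nonneg orth by blast
    then show ?thesis by (simp add: norm_orthogonal_matrix path_prob_nonneg nonneg)
  qed simp
  have "(\<lambda>p. norm (path_prob w p *\<^sub>R path_sig \<sigma> p)) summable_on hit_paths x j"
    by (rule Infinite_Sum.abs_summable_on_comparison_test'[OF summable bound])
  then show ?thesis by (rule abs_summable_summable)
qed

lemma Omega0_first_step:
  assumes "x \<noteq> j"
  shows "Omega0 w \<sigma> x j = (\<Sum>y\<in>UNIV. (w x y / gdeg w x) *\<^sub>R (\<sigma> x y ** Omega0 w \<sigma> y j))"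
proof -
  define f where "f p = path_prob w p *\<^sub>R path_sig \<sigma> p" for p
  have Omega0_eq: "Omega0 w \<sigma> y j = infsum f (hit_paths y j)" for y
    by (simp add: Omega0_def f_def[abs_def])
  have summable: "f summable_on hit_paths y j" for y
    unfolding f_def by (rule Omega0_summable)
  have first_step: "infsum f ((#) x ` hit_paths y j) = (w x y / gdeg w x) *\<^sub>R (\<sigma> x y ** infsum f (hit_paths y j))"
    for y
  proof -
    have "infsum f ((#) x ` hit_paths y j) = infsum (\<lambda>q. (w x y / gdeg w x) *\<^sub>R (\<sigma> x y ** f q)) (hit_paths y j)"
      by (simp add: infsum_reindex) (auto intro!: infsum_cong simp: f_def path_prob_Cons path_sig_Cons
          matrix_scalar_ac scalar_matrix_assoc[symmetric] dest!: hit_paths_hd)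
    also have "\<dots> = (w x y / gdeg w x) *\<^sub>R infsum (\<lambda>q. \<sigma> x y ** f q) (hit_paths y j)"
      by (rule infsum_scaleR_right)
    also have "infsum (\<lambda>q. \<sigma> x y ** f q) (hit_paths y j) = \<sigma> x y ** infsum f (hit_paths y j)"
      by (rule infsumI, rule has_sum_bounded_linear[OF bounded_linear_matrix_mult_left])
        (rule has_sum_infsum[OF summable])
    finally show ?thesis .
  qed
  have "Omega0 w \<sigma> x j = (\<Sum>y\<in>UNIV. infsum f ((#) x ` hit_paths y j))"
    unfolding Omega0_eq hit_paths_Cons[OF assms]
  proof (rule sum_infsum[symmetric])
    show "f summable_on (#) x ` hit_paths y j" for y
      using summable[of x] by (rule summable_on_subset_banach) (use hit_paths_Cons[OF assms] in blast)
  qed (auto dest: hit_paths_hd)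
  then show ?thesis by (simp add: first_step Omega0_eq)
qed

end

section \<open>Graph Laplacians and classical effective resistance\<close>

lemma lap_mult_vector_nth: "(lap w *v f) $ x = gdeg w x * f $ x - (\<Sum>z\<in>UNIV. w x z * f $ z)"
proof -
  have "(lap w *v f) $ x = (\<Sum>z\<in>UNIV. (if x = z then gdeg w x * f $ z else 0) - w x z * f $ z)"
    unfolding matrix_vector_mult_def lap_def by (auto simp: left_diff_distrib intro!: sum.cong)
  then show ?thesis by (simp add: sum_subtractf)
qed

lemma eff_res_commute: "eff_res w j i = eff_res w i j"
proof -
  have "axis j (1::real) - axis i 1 = (-1::real) *\<^sub>R (axis i 1 - axis j 1)" by simp
  then show ?thesis unfolding eff_res_def Let_def
    by (simp only: matrix_vector_mult_scaleR inner_scaleR_left inner_scaleR_right)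
qed

locale weighted_graph =
  fixes w :: "'n::finite \<Rightarrow> 'n \<Rightarrow> real"
  assumes weight_sym: "w x y = w y x"
    and weight_nonneg: "0 \<le> w x y"
begin

lemma sum_weight_swap: "(\<Sum>x\<in>UNIV. \<Sum>z\<in>UNIV. w x z * g z) = (\<Sum>z\<in>UNIV. gdeg w z * g z)"
  by (subst sum.swap) (simp add: gdeg_def sum_distrib_right weight_sym)

lemma half_sum_edges:
  assumes "\<And>x z. w x z * e x z = w x z * (a x + a z - 2 * b x z)"
  shows "(\<Sum>x\<in>UNIV. \<Sum>z\<in>UNIV. w x z * e x z) / 2 =
    (\<Sum>x\<in>UNIV. gdeg w x * a x - (\<Sum>z\<in>UNIV. w x z * b x z))"
proof -
  have "(\<Sum>x\<in>UNIV. \<Sum>z\<in>UNIV. w x z * e x z) =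
      (\<Sum>x\<in>UNIV. \<Sum>z\<in>UNIV. w x z * a x + w x z * a z - 2 * (w x z * b x z))"
    by (intro sum.cong refl) (simp only: assms, simp add: algebra_simps)
  also have "\<dots> = (\<Sum>x\<in>UNIV. \<Sum>z\<in>UNIV. w x z * a x) + (\<Sum>x\<in>UNIV. \<Sum>z\<in>UNIV. w x z * a z)
      - 2 * (\<Sum>x\<in>UNIV. \<Sum>z\<in>UNIV. w x z * b x z)"
    by (simp add: sum.distrib sum_subtractf sum_distrib_left)
  also have "\<dots> = 2 * (\<Sum>x\<in>UNIV. gdeg w x * a x) - 2 * (\<Sum>x\<in>UNIV. \<Sum>z\<in>UNIV. w x z * b x z)"
    by (simp add: sum_weight_swap gdeg_def sum_distrib_right)
  finally show ?thesis by (simp add: sum_subtractf)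
qed

lemma lap_symmetric: "transpose (lap w) = lap w"
  by (simp add: vec_eq_iff transpose_def lap_def weight_sym)

lemma lap_quadratic_form:
  "f \<bullet> (lap w *v f) = (\<Sum>x\<in>UNIV. \<Sum>z\<in>UNIV. w x z * (f$x - f$z)\<^sup>2) / 2"
proof -
  have "f \<bullet> (lap w *v f) = (\<Sum>x\<in>UNIV. gdeg w x * (f$x * f$x) - (\<Sum>z\<in>UNIV. w x z * (f$x * f$z)))"
    by (simp add: inner_vec_def lap_mult_vector_nth right_diff_distrib sum_distrib_left mult_ac)
  also have "\<dots> = (\<Sum>x\<in>UNIV. \<Sum>z\<in>UNIV. w x z * (f$x - f$z)\<^sup>2) / 2"
    by (rule half_sum_edges[symmetric]) (simp add: power2_eq_square algebra_simps)
  finally show ?thesis .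
qed

lemma lap_psd: "0 \<le> f \<bullet> (lap w *v f)"
  unfolding lap_quadratic_form by (intro divide_nonneg_nonneg sum_nonneg mult_nonneg_nonneg weight_nonneg) auto

lemma sum_lap_mult_vector: "(\<Sum>x\<in>UNIV. (lap w *v g) $ x) = 0"
  by (simp add: lap_mult_vector_nth sum_subtractf sum_weight_swap)

end

locale connected_graph = weighted_graph w for w :: "'n::finite \<Rightarrow> 'n \<Rightarrow> real" +
  assumes connected: "((\<lambda>a b. 0 < w a b)\<^sup>*\<^sup>*) x y"
begin

lemma lap_kernel_constant:
  assumes "lap w *v q = 0"
  shows "q $ x = q $ y"
proof -
  have "(\<Sum>x\<in>UNIV. \<Sum>z\<in>UNIV. w x z * (q$x - q$z)\<^sup>2) = 0"
    using lap_quadratic_form[of q] assms by simp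
  then have "w a b * (q$a - q$b)\<^sup>2 = 0" for a b
    by (simp add: sum_nonneg_eq_0_iff sum_nonneg weight_nonneg)
  then have "q $ a = q $ b" if "0 < w a b" for a b
    using that by (metis mult_eq_0_iff order_less_irrefl power_eq_0_iff right_minus_eq)
  with connected[of x y] show ?thesis
    by (induction rule: rtranclp_induct) auto
qed

lemma lap_pinv_solves:
  assumes "(\<Sum>x\<in>UNIV. v $ x) = 0"
  shows "lap w *v (pinv (lap w) *v v) = v"
proof -
  let ?L = "lap w" and ?X = "pinv (lap w)"
  have pen: "?L ** ?X ** ?L = ?L" "transpose (?L ** ?X) = ?L ** ?X"
    using penrose_inverse_pinv_symmetric[OF lap_symmetric] by (auto simp: penrose_inverse_def)
  have "?L ** ?X = ?X ** ?L"
    using pen(2) by (simp add: matrix_transpose_mul lap_symmetric pinv_symmetric[OF lap_symmetric])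
  then have LLX: "?L ** (?L ** ?X) = ?L"
    by (metis pen(1) matrix_mul_assoc)
  define q where "q = v - ?L *v (?X *v v)"
  have "?L *v q = 0"
    by (simp add: q_def LLX matrix_vector_mult_diff_distrib matrix_vector_mul_assoc)
  then have "q $ y = q $ x" for x y
    by (rule lap_kernel_constant)
  then have "(\<Sum>y\<in>UNIV. q $ y) = (\<Sum>y\<in>(UNIV::'n set). q $ x)" for x
    by (rule sum.cong[OF refl])
  moreover have "(\<Sum>y\<in>UNIV. q $ y) = 0"
    by (simp add: q_def sum_subtractf assms sum_lap_mult_vector)
  ultimately have "q = 0" by (simp add: vec_eq_iff)
  then show ?thesis by (simp add: q_def)
qed

lemma
  shows eff_res_nonneg: "0 \<le> eff_res w i j"
    and square_diff_le_eff_res_energy: "(f $ i - f $ j)\<^sup>2 \<le> eff_res w i j * (f \<bullet> (lap w *v f))"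
proof -
  define v where "v = axis i (1::real) - axis j 1"
  define g where "g = pinv (lap w) *v v"
  have Lg: "lap w *v g = v"
    unfolding g_def by (rule lap_pinv_solves) (simp add: v_def sum_subtractf axis_def)
  have "eff_res w i j = v \<bullet> g" by (simp add: eff_res_def Let_def v_def g_def)
  also have "\<dots> = g \<bullet> (lap w *v g)" by (simp add: Lg inner_commute)
  finally have res: "eff_res w i j = g \<bullet> (lap w *v g)" .
  then show "0 \<le> eff_res w i j" by (simp add: lap_psd)
  have "f $ i - f $ j = g \<bullet> (lap w *v f)"
    by (simp add: symmetric_matrix_inner_commute[OF lap_symmetric, of g] Lg v_def
        inner_diff_right inner_axis)
  then show "(f $ i - f $ j)\<^sup>2 \<le> eff_res w i j * (f \<bullet> (lap w *v f))"
    using psd_cauchy_schwarz[OF lap_symmetric lap_psd, of g f] by (simp add: res)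
qed

end

section \<open>Connection Laplacians\<close>

lemma norm_orthogonal_matrix_mult_vector:
  fixes S :: "real^'d::finite^'d"
  assumes "orthogonal_matrix S"
  shows "norm (S *v v) = norm v"
proof -
  have "orthogonal_transformation ((*v) S)"
    using assms by (simp add: orthogonal_transformation_matrix)
  then show ?thesis by (rule orthogonal_transformation_norm)
qed

lemma sum_UNIV_prod:
  "(\<Sum>r\<in>(UNIV::('a::finite \<times> 'b::finite) set). g r) = (\<Sum>x\<in>UNIV. \<Sum>a\<in>UNIV. g (x, a))"
  by (simp add: UNIV_Times_UNIV[symmetric] sum.cartesian_product del: UNIV_Times_UNIV)

definition block :: "real^('n::finite \<times> 'd::finite) \<Rightarrow> 'n \<Rightarrow> real^'d" where
  "block Y x = (\<chi> a. Y $ (x, a))"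

lemma block_nth [simp]: "block Y x $ a = Y $ (x, a)"
  by (simp add: block_def)

lemma block_diff: "block (Y - Z) x = block Y x - block Z x"
  by (simp add: vec_eq_iff)

lemma inner_eq_sum_block: "Y \<bullet> Z = (\<Sum>x\<in>UNIV. block Y x \<bullet> block Z x)"
  by (simp add: inner_vec_def sum_UNIV_prod)

definition block_norms :: "real^('n::finite \<times> 'd::finite) \<Rightarrow> real^'n" where
  "block_norms Y = (\<chi> x. norm (block Y x))"

lemma conn_lap_mult_vector_nth:
  "(conn_lap w \<sigma> *v Y) $ (x, a) = gdeg w x * Y $ (x, a) - (\<Sum>z\<in>UNIV. w x z * (\<sigma> x z *v block Y z) $ a)"
proof -
  have "(conn_lap w \<sigma> *v Y) $ (x, a) = (\<Sum>r\<in>UNIV. (if (x, a) = r then gdeg w x * Y $ r else 0)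
      - w x (fst r) * (\<sigma> x (fst r) $ a $ snd r) * Y $ r)"
    unfolding matrix_vector_mult_def conn_lap_def by (auto simp: left_diff_distrib intro!: sum.cong)
  also have "\<dots> = gdeg w x * Y $ (x, a) - (\<Sum>r\<in>UNIV. w x (fst r) * (\<sigma> x (fst r) $ a $ snd r) * Y $ r)"
    by (simp add: sum_subtractf)
  also have "(\<Sum>r\<in>UNIV. w x (fst r) * (\<sigma> x (fst r) $ a $ snd r) * Y $ r) =
      (\<Sum>z\<in>UNIV. w x z * (\<sigma> x z *v block Y z) $ a)"
    by (simp add: sum_UNIV_prod matrix_vector_mult_def sum_distrib_left mult.assoc)
  finally show ?thesis .
qed

lemma block_column_Nmat:
  assumes "i \<noteq> j"
  shows "block (column b (Nmat w \<sigma> i j)) x =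
    (if x = i then axis b 1 else if x = j then - (Omega0 w \<sigma> i j $ b) else 0)"
  using assms by (auto simp: vec_eq_iff Nmat_def column_def transpose_def axis_def)

lemma inner_column_Nmat:
  assumes "i \<noteq> j"
  shows "column b (Nmat w \<sigma> i j) \<bullet> Y = (block Y i - Omega0 w \<sigma> i j *v block Y j) $ b"
proof -
  have "block (column b (Nmat w \<sigma> i j)) x \<bullet> block Y x =
      (if x = i then axis b 1 \<bullet> block Y i else 0) - (if x = j then Omega0 w \<sigma> i j $ b \<bullet> block Y j else 0)"
    for x
    using assms by (simp add: block_column_Nmat)
  then have "column b (Nmat w \<sigma> i j) \<bullet> Y = axis b 1 \<bullet> block Y i - Omega0 w \<sigma> i j $ b \<bullet> block Y j"
    by (simp add: inner_eq_sum_block sum_subtractf)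
  then show ?thesis
    by (simp add: inner_axis') (simp add: matrix_vector_mult_def inner_vec_def)
qed

locale connection_graph = weighted_graph w for w :: "'n::finite \<Rightarrow> 'n \<Rightarrow> real" +
  fixes \<sigma> :: "'n \<Rightarrow> 'n \<Rightarrow> real^'d::finite^'d"
  assumes sig_orthogonal: "0 < w x y \<Longrightarrow> orthogonal_matrix (\<sigma> x y)"
    and sig_transpose: "0 < w x y \<Longrightarrow> \<sigma> y x = transpose (\<sigma> x y)"
begin

lemma conn_lap_symmetric: "transpose (conn_lap w \<sigma>) = conn_lap w \<sigma>"
proof -
  have "conn_lap w \<sigma> $ c $ r = conn_lap w \<sigma> $ r $ c" for r c
  proof (cases "0 < w (fst r) (fst c)")
    case True
    have "\<sigma> (fst c) (fst r) = transpose (\<sigma> (fst r) (fst c))" "w (fst c) (fst r) = w (fst r) (fst c)"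
      using sig_transpose[OF True] weight_sym by simp_all
    then show ?thesis by (auto simp: conn_lap_def transpose_def)
  next
    case False
    then have "w (fst r) (fst c) = 0" "w (fst c) (fst r) = 0"
      using weight_nonneg[of "fst r" "fst c"] weight_sym[of "fst r"] by auto
    then show ?thesis by (auto simp: conn_lap_def)
  qed
  then show ?thesis by (simp add: vec_eq_iff transpose_def)
qed

lemma conn_lap_quadratic_form:
  "Y \<bullet> (conn_lap w \<sigma> *v Y) =
    (\<Sum>x\<in>UNIV. \<Sum>z\<in>UNIV. w x z * (norm (block Y x - \<sigma> x z *v block Y z))\<^sup>2) / 2"
proof -
  have "Y \<bullet> (conn_lap w \<sigma> *v Y) = (\<Sum>x\<in>UNIV. gdeg w x * (block Y x \<bullet> block Y x)
      - (\<Sum>z\<in>UNIV. w x z * (block Y x \<bullet> (\<sigma> x z *v block Y z))))"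
  proof -
    have "block Y x \<bullet> block (conn_lap w \<sigma> *v Y) x = gdeg w x * (block Y x \<bullet> block Y x)
        - (\<Sum>z\<in>UNIV. w x z * (block Y x \<bullet> (\<sigma> x z *v block Y z)))" for x
      by (simp add: inner_vec_def conn_lap_mult_vector_nth right_diff_distrib sum_subtractf
          sum_distrib_left mult_ac) (rule sum.swap)
    then show ?thesis by (simp add: inner_eq_sum_block)
  qed
  also have "\<dots> = (\<Sum>x\<in>UNIV. \<Sum>z\<in>UNIV. w x z * (norm (block Y x - \<sigma> x z *v block Y z))\<^sup>2) / 2"
  proof (rule half_sum_edges[symmetric])
    fix x z
    show "w x z * (norm (block Y x - \<sigma> x z *v block Y z))\<^sup>2 =
        w x z * (block Y x \<bullet> block Y x + block Y z \<bullet> block Y z - 2 * (block Y x \<bullet> (\<sigma> x z *v block Y z)))"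
    proof (cases "0 < w x z")
      case True
      have "(\<sigma> x z *v block Y z) \<bullet> (\<sigma> x z *v block Y z) = block Y z \<bullet> block Y z"
        using norm_orthogonal_matrix_mult_vector[OF sig_orthogonal[OF True], of "block Y z"]
        by (simp add: dot_square_norm)
      then show ?thesis
        by (simp add: power2_norm_eq_inner inner_diff_left inner_diff_right inner_commute algebra_simps)
    qed (use weight_nonneg[of x z] in simp)
  qed
  finally show ?thesis .
qed

lemma conn_lap_psd: "0 \<le> Y \<bullet> (conn_lap w \<sigma> *v Y)"
  unfolding conn_lap_quadratic_form
  by (intro divide_nonneg_nonneg sum_nonneg mult_nonneg_nonneg weight_nonneg) auto

text \<open>By orthogonality of \<open>\<sigma>\<close> and the reverse triangle inequality, passing to the vertex
  norms can only decrease each edge term of the energy.\<close>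

lemma lap_energy_block_norms_le:
  "block_norms Y \<bullet> (lap w *v block_norms Y) \<le> Y \<bullet> (conn_lap w \<sigma> *v Y)"
proof -
  have "w x z * (norm (block Y x) - norm (block Y z))\<^sup>2 \<le> w x z * (norm (block Y x - \<sigma> x z *v block Y z))\<^sup>2"
    for x z
  proof (cases "0 < w x z")
    case True
    then have "\<bar>norm (block Y x) - norm (block Y z)\<bar> \<le> norm (block Y x - \<sigma> x z *v block Y z)"
      using norm_triangle_ineq3[of "block Y x" "\<sigma> x z *v block Y z"]
      by (simp add: norm_orthogonal_matrix_mult_vector sig_orthogonal)
    then have "(norm (block Y x) - norm (block Y z))\<^sup>2 \<le> (norm (block Y x - \<sigma> x z *v block Y z))\<^sup>2"
      by (metis abs_le_square_iff abs_norm_cancel)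
    then show ?thesis
      using True by (simp add: mult_left_mono)
  qed (use weight_nonneg[of x z] in simp)
  then show ?thesis
    unfolding conn_lap_quadratic_form lap_quadratic_form block_norms_def
    by (simp add: divide_right_mono sum_mono)
qed

definition harmonic_extension :: "'n \<Rightarrow> real^'d \<Rightarrow> real^('n \<times> 'd)" where
  "harmonic_extension j c = (\<chi> r. (Omega0 w \<sigma> (fst r) j *v c) $ snd r)"

lemma harmonic_extension_nth: "harmonic_extension j c $ (x, a) = (Omega0 w \<sigma> x j *v c) $ a"
  by (simp add: harmonic_extension_def)

lemma block_harmonic_extension: "block (harmonic_extension j c) x = Omega0 w \<sigma> x j *v c"
  by (simp add: harmonic_extension_nth vec_eq_iff)

lemma conn_lap_harmonic_extension:
  assumes "x \<noteq> j"
  shows "block (conn_lap w \<sigma> *v harmonic_extension j c) x = 0"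
proof (cases "gdeg w x = 0")
  case True
  then have "w x z = 0" for z
    using sum_nonneg_eq_0_iff[of UNIV "w x"] weight_nonneg by (simp add: gdeg_def)
  with True show ?thesis by (simp add: vec_eq_iff conn_lap_mult_vector_nth)
next
  case False
  have "Omega0 w \<sigma> x j *v c = (\<Sum>z\<in>UNIV. (w x z / gdeg w x) *\<^sub>R (\<sigma> x z ** Omega0 w \<sigma> z j)) *v c"
    using Omega0_first_step[OF weight_nonneg sig_orthogonal assms] by simp
  also have "\<dots> = (\<Sum>z\<in>UNIV. (w x z / gdeg w x) *\<^sub>R (\<sigma> x z *v (Omega0 w \<sigma> z j *v c)))"
    by (simp add: matrix_vector_mult_sum_left,
        simp add: matrix_vector_mul_assoc flip: scaleR_matrix_vector_assoc)
  finally have "Omega0 w \<sigma> x j *v c =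
      (\<Sum>z\<in>UNIV. (w x z / gdeg w x) *\<^sub>R (\<sigma> x z *v (Omega0 w \<sigma> z j *v c)))" .
  with False show ?thesis
    by (simp add: vec_eq_iff conn_lap_mult_vector_nth block_harmonic_extension sum_component
        sum_distrib_left harmonic_extension_nth)
qed

text \<open>The harmonic extension is orthogonal, with respect to the energy form, to every vector
  vanishing at \<open>j\<close>; hence subtracting it cannot increase the energy.\<close>

lemma
  fixes Y :: "real^('n \<times> 'd)" and j :: 'n
  defines "Z \<equiv> Y - harmonic_extension j (block Y j)"
  shows block_sub_harmonic_extension_self: "block Z j = 0"
    and energy_sub_harmonic_extension_le: "Z \<bullet> (conn_lap w \<sigma> *v Z) \<le> Y \<bullet> (conn_lap w \<sigma> *v Y)"
proof -
  define H where "H = harmonic_extension j (block Y j)"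
  show Zj: "block Z j = 0"
    by (simp add: Z_def block_diff block_harmonic_extension Omega0_self)
  have "block Z x \<bullet> block (conn_lap w \<sigma> *v H) x = 0" for x
    by (cases "x = j") (simp_all add: Zj H_def conn_lap_harmonic_extension)
  then have ZH: "Z \<bullet> (conn_lap w \<sigma> *v H) = 0"
    by (simp add: inner_eq_sum_block)
  moreover have "H \<bullet> (conn_lap w \<sigma> *v Z) = 0"
    using ZH symmetric_matrix_inner_commute[OF conn_lap_symmetric] by metis
  moreover have "Y \<bullet> (conn_lap w \<sigma> *v Y) = Z \<bullet> (conn_lap w \<sigma> *v Z) + Z \<bullet> (conn_lap w \<sigma> *v H)
      + H \<bullet> (conn_lap w \<sigma> *v Z) + H \<bullet> (conn_lap w \<sigma> *v H)"
    by (simp add: Z_def H_def matrix_vector_right_distrib inner_add_left inner_add_right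
        matrix_vector_mult_diff_distrib inner_diff_left inner_diff_right)
  ultimately show "Z \<bullet> (conn_lap w \<sigma> *v Z) \<le> Y \<bullet> (conn_lap w \<sigma> *v Y)"
    using conn_lap_psd[of H] by simp
qed

end

locale connected_connection_graph = connection_graph w \<sigma> + connected_graph w
  for w :: "'n::finite \<Rightarrow> 'n \<Rightarrow> real" and \<sigma> :: "'n \<Rightarrow> 'n \<Rightarrow> real^'d::finite^'d"
begin

lemma column_Nmat_energy_bound:
  assumes "i \<noteq> j"
  shows "2 * (column b (Nmat w \<sigma> i j) \<bullet> Y) - Y \<bullet> (conn_lap w \<sigma> *v Y) \<le> eff_res w i j"
proof -
  define Z where "Z = Y - harmonic_extension j (block Y j)"
  define f where "f = block_norms Z"
  define s where "s = column b (Nmat w \<sigma> i j) \<bullet> Y"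
  have "s = block Z i $ b"
    by (simp add: s_def Z_def inner_column_Nmat[OF assms] block_diff block_harmonic_extension)
  then have "\<bar>s\<bar> \<le> f $ i"
    using component_le_norm_cart[of "block Z i" b] by (simp add: f_def block_norms_def)
  moreover have "f $ j = 0"
    by (simp add: f_def block_norms_def Z_def block_sub_harmonic_extension_self)
  ultimately have "s\<^sup>2 \<le> (f $ i - f $ j)\<^sup>2"
    using power_mono[of "\<bar>s\<bar>" "f $ i" 2] by simp
  also have "\<dots> \<le> eff_res w i j * (f \<bullet> (lap w *v f))"
    by (rule square_diff_le_eff_res_energy)
  also have "\<dots> \<le> eff_res w i j * (Y \<bullet> (conn_lap w \<sigma> *v Y))"
    using lap_energy_block_norms_le[of Z] energy_sub_harmonic_extension_le[of Y j]
    by (intro mult_left_mono eff_res_nonneg) (simp_all add: f_def Z_def)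
  finally show ?thesis
    unfolding s_def[symmetric] by (rule two_mul_sub_le_of_square_le[OF _ eff_res_nonneg conn_lap_psd])
qed

lemma trace_Wmat_energy_le:
  assumes "i \<noteq> j"
  shows "mtrace (transpose (Wmat w \<sigma> i j) ** conn_lap w \<sigma> ** Wmat w \<sigma> i j) \<le> CARD('d) * eff_res w i j"
proof -
  let ?C = "conn_lap w \<sigma>" and ?X = "pinv (conn_lap w \<sigma>)" and ?N = "Nmat w \<sigma> i j"
  have pen: "penrose_inverse ?C ?X" and sym: "transpose ?X = ?X"
    using conn_lap_symmetric by (simp_all add: penrose_inverse_pinv_symmetric pinv_symmetric)
  have "transpose (Wmat w \<sigma> i j) ** ?C ** Wmat w \<sigma> i j = transpose ?N ** (?X ** ?C ** ?X) ** ?N"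
    by (simp add: Wmat_def matrix_transpose_mul sym matrix_mul_assoc)
  also have "?X ** ?C ** ?X = ?X"
    using pen by (simp add: penrose_inverse_def)
  finally have "transpose (Wmat w \<sigma> i j) ** ?C ** Wmat w \<sigma> i j = transpose ?N ** ?X ** ?N" .
  then have "mtrace (transpose (Wmat w \<sigma> i j) ** ?C ** Wmat w \<sigma> i j) =
      (\<Sum>b\<in>UNIV. column b ?N \<bullet> (?X *v column b ?N))"
    by (simp add: mtrace_def diag_transpose_mult_mult)
  also have "\<dots> \<le> (\<Sum>b\<in>(UNIV::'d set). eff_res w i j)"
    by (intro sum_mono penrose_inverse_quadratic_form_le[OF pen sym] column_Nmat_energy_bound assms)
  finally show ?thesis by simp
qed

lemma conn_eff_res_le_eff_res:
  assumes "i \<noteq> j"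
  shows "conn_eff_res w \<sigma> i j \<le> eff_res w i j"
proof -
  let ?E = "\<lambda>i j. mtrace (transpose (Wmat w \<sigma> i j) ** conn_lap w \<sigma> ** Wmat w \<sigma> i j)"
  have "?E i j \<le> CARD('d) * eff_res w i j" and "?E j i \<le> CARD('d) * eff_res w i j"
    using trace_Wmat_energy_le[OF assms] trace_Wmat_energy_le[of j i] assms
    by (simp_all add: eff_res_commute[of w j i])
  then have "(?E i j + ?E j i) / (2 * CARD('d)) \<le> (2 * (CARD('d) * eff_res w i j)) / (2 * CARD('d))"
    by (intro divide_right_mono) simp_all
  then show ?thesis
    by (simp add: conn_eff_res_def mtrace_add)
qed

end

lemma conn_graph_imp_connected_connection_graph:
  assumes "conn_graph w \<sigma>"
  shows "connected_connection_graph w \<sigma>"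
proof -
  have "\<forall>x y. w x y = w y x" "\<forall>x y. 0 \<le> w x y" "\<forall>x y. ((\<lambda>a b. 0 < w a b)\<^sup>*\<^sup>*) x y"
    "\<forall>x y. 0 < w x y \<longrightarrow> orthogonal_matrix (\<sigma> x y) \<and> \<sigma> y x = transpose (\<sigma> x y)"
    using assms unfolding conn_graph_def by blast+
  then show ?thesis
    by unfold_locales blast+
qed

theorem proposition6p12:
  fixes w :: "'n::finite \<Rightarrow> 'n \<Rightarrow> real" and \<sigma> :: "'n \<Rightarrow> 'n \<Rightarrow> real^'d::finite^'d"
    and i j :: 'n
  assumes "conn_graph w \<sigma>" and "i \<noteq> j"
  shows "conn_eff_res w \<sigma> i j \<le> eff_res w i j"
proof -
  interpret connected_connection_graph w \<sigma>
    using assms(1) by (rule conn_graph_imp_connected_connection_graph)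
  show ?thesis using assms(2) by (rule conn_eff_res_le_eff_res)
qed

end
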